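(* (i) Let $p, m, r \in \mathbb N$. Then \begin{align*} S(p,m,1,r,0) &=\sum_{i=2}^{m}\frac{(-1)^{m-i}}{r^{m-i+1}}S_{p,i}^{+,+}+\frac{(-1)^{m-1}}{r^{m}}\zeta(p+1)\\ &\quad +\frac{(-1)^{m-1}}{r^{m}}\left(\sum_{j=1}^{r-1}\frac{(-1)^{p+1}H_j}{j^p} +\sum_{\ell=2}^{p}(-1)^{p-\ell}H_{r-1}^{(p-\ell+1)}\zeta(\ell)\right)\,. \end{align*} (ii) Let $m, r \in \mathbb N$, $p \in \mathbb N_{0}$ with $m \geq p+2$. Then \begin{align*} S(-p,m,1,r,0) =\frac{1}{p+1}\sum_{\ell=0}^{p} \binom{p+1}{\ell}B_{\ell}^{+} \left(\sum_{i=2}^{m-p-1+\ell}\frac{(-1)^{m-p-1+\ell-i}}{r^{m-p+\ell-i}}\zeta(i) +\frac{(-1)^{m-p-2+\ell}}{r^{m-p-1+\ell}} H_{r}\right)\,. \end{align*}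
   Context: $H_n^{(q)}=\sum_{j=1}^n j^{-q}$ for $q\in\mathbb N$, $H_n=H_n^{(1)}$, $H_0^{(q)}=0$; for an integer $q\ge0$, $H_n^{(-q)}=\sum_{\ell=1}^n\ell^q$. For $q\in\mathbb Z$ and $m,t,r\in\mathbb N$, $S(q,m,t,r,0):=\sum_{n=1}^\infty\frac{H_n^{(q)}}{n^{m}(n+r)^{t}}$. $S_{p,q}^{+,+}:=\sum_{n=1}^\infty H_n^{(p)}/n^q$. $\zeta$ is the Riemann zeta function. Bernoulli numbers $B_j^{+}$: $\frac{x}{1-e^{-x}}=\sum_{j\ge0}B_j^{+}\frac{x^j}{j!}$. Empty sums are $0$. *)

theory Defs
  imports "HOL-Analysis.Analysis" "HOL-Computational_Algebra.Formal_Power_Series"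
begin

text \<open>Generalized harmonic numbers H_n^(q) for q an integer:
  for q >= 1 this is sum_{j=1}^n j^(-q); for q = -q' <= 0 it is sum_{l=1}^n l^q'.
  Both cases are the single formula sum_{j=1}^n j powi (-q).\<close>
definition gharm :: "int \<Rightarrow> nat \<Rightarrow> real" where
  "gharm q n = (\<Sum>j=1..n. (real j) powi (- q))"

text \<open>S(q,m,t,r,0) = sum_{n>=1} H_n^(q) / (n^m (n+r)^t).\<close>
definition S_sum :: "int \<Rightarrow> nat \<Rightarrow> nat \<Rightarrow> nat \<Rightarrow> real" where
  "S_sum q m t r = (\<Sum>n. gharm q (Suc n) / (real (Suc n) ^ m * real (Suc n + r) ^ t))"

definition S_pp :: "nat \<Rightarrow> nat \<Rightarrow> real" where
  "S_pp p q = (\<Sum>n. gharm (int p) (Suc n) / real (Suc n) ^ q)"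

text \<open>Riemann zeta at integer arguments (used only for s >= 2).\<close>
definition zeta_nat :: "nat \<Rightarrow> real" where
  "zeta_nat s = (\<Sum>n. 1 / real (Suc n) ^ s)"

definition bernoulli_plus :: "nat \<Rightarrow> real" where
  "bernoulli_plus j = fact j * fps_nth (fps_X / (1 - fps_exp (-1))) j"

end

theory Submission
  imports Defs "HOL-Real_Asymp.Real_Asymp"
begin

text \<open>The partial fraction expansion of \<open>1/(x^k (x+r))\<close> in powers of \<open>1/x\<close> turns
  \<open>S(p,m,1,r,0)\<close> into the Euler sums \<open>S_{p,i}^{+,+}\<close> plus a multiple of the single series
  \<open>\<Sum>n H_n^(p) (1/n - 1/(n+r))\<close>. Abel summation rewrites that series as
  \<open>\<Sum>j<r \<Sum>k 1/(k^p (k+j))\<close>, and the same partial fraction expansion evaluates each inner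
  series by zeta values and harmonic numbers. For negative order, Faulhaber's formula writes
  \<open>H_n^(-p)\<close> as a polynomial in \<open>n\<close> with coefficients \<open>B_l^+\<close>; each of its monomials
  contributes a series \<open>\<Sum>n 1/(n^k (n+r))\<close> of the same kind.\<close>

lemma gharm_of_nat: "gharm (int p) n = (\<Sum>j=1..n. 1 / real j ^ p)"
  by (simp add: gharm_def power_int_minus divide_inverse power_int_of_nat)

lemma gharm_uminus_of_nat: "gharm (- int p) n = (\<Sum>j=1..n. real j ^ p)"
  by (simp add: gharm_def power_int_of_nat)

lemma gharm_one: "gharm 1 n = harm n"
  using gharm_of_nat[of 1 n] by (simp add: harm_def divide_inverse)

lemma gharm_of_nat_nonneg: "gharm (int p) n \<ge> 0"
  unfolding gharm_of_nat by (intro sum_nonneg) auto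

lemma gharm_of_nat_le_harm:
  assumes "p \<ge> 1"
  shows "gharm (int p) n \<le> harm n"
  unfolding gharm_of_nat harm_def
proof (rule sum_mono)
  fix j assume j: "j \<in> {1..n}"
  then have "real j ^ 1 \<le> real j ^ p"
    using assms by (intro power_increasing) auto
  with j show "1 / real j ^ p \<le> inverse (real j)"
    by (simp add: divide_inverse le_imp_inverse_le)
qed

lemma harm_add_minus_harm: "harm (n + j) - harm n = (\<Sum>i<j. 1 / real (Suc n + i))"
  by (induction j) (simp_all add: harm_Suc divide_inverse)

lemma harm_divide_Suc_tendsto_0: "(\<lambda>n. harm n / real (Suc n)) \<longlonglongrightarrow> 0"
proof -
  have "(\<lambda>n. (harm n - ln (real n)) * (1 / real (Suc n)) + ln (real n) / real (Suc n))
          \<longlonglongrightarrow> euler_mascheroni * 0 + 0"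
    by (intro tendsto_add tendsto_mult euler_mascheroni_LIMSEQ) real_asymp+
  then show ?thesis
    by (simp add: diff_divide_distrib)
qed

lemma summable_inverse_power_Suc:
  assumes "i \<ge> 2"
  shows "summable (\<lambda>n. 1 / real (Suc n) ^ i)"
proof -
  have "summable (\<lambda>n. inverse (real n ^ i))"
    using assms by (rule inverse_power_summable)
  then show ?thesis
    by (subst (asm) summable_Suc_iff[symmetric]) (simp add: divide_inverse)
qed

lemma partial_fraction_inverse_power_times_shift:
  fixes x r :: "'a :: field"
  assumes x: "x \<noteq> 0" and r: "r \<noteq> 0" and xr: "x + r \<noteq> 0" and k: "k \<ge> 1"
  shows "1 / (x ^ k * (x + r)) =
           (\<Sum>i=2..k. (-1) ^ (k - i) / r ^ (k - i + 1) * (1 / x ^ i))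
           + (-1) ^ (k - 1) / r ^ k * (1 / x - 1 / (x + r))"
  using k
proof (induction k rule: dec_induct)
  case base
  show ?case using x r xr by (simp add: field_simps)
next
  case (step k)
  define S where "S k = (\<Sum>i=2..k. (-1) ^ (k - i) / r ^ (k - i + 1) * (1 / x ^ i))" for k
  define c where "c k = (-1) ^ (k - 1) / r ^ k" for k
  have S_Suc: "S (Suc k) = - (1 / r) * S k + 1 / r * (1 / x ^ Suc k)"
  proof -
    have "(\<Sum>i=2..k. (-1) ^ (Suc k - i) / r ^ (Suc k - i + 1) * (1 / x ^ i))
            = (\<Sum>i=2..k. - (1 / r) * ((-1) ^ (k - i) / r ^ (k - i + 1) * (1 / x ^ i)))"
      by (rule sum.cong) (auto simp: Suc_diff_le mult_ac)
    then show ?thesis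
      using step.hyps by (simp add: S_def sum_distrib_left)
  qed
  have c_Suc: "c (Suc k) = - (1 / r) * c k"
    using step.hyps by (cases k) (simp_all add: c_def)
  have "1 / (x ^ Suc k * (x + r)) = 1 / r * (1 / x ^ Suc k) - 1 / r * (1 / (x ^ k * (x + r)))"
    using x r xr by (simp add: divide_simps)
  also have "\<dots> = (- (1 / r) * S k + 1 / r * (1 / x ^ Suc k)) + - (1 / r) * c k * (1 / x - 1 / (x + r))"
    unfolding step.IH[folded S_def c_def] by (simp add: algebra_simps)
  also have "\<dots> = S (Suc k) + c (Suc k) * (1 / x - 1 / (x + r))"
    unfolding S_Suc c_Suc ..
  finally show ?case
    unfolding S_def c_def .
qed

lemma sums_weighted_inverse_power_times_shift:
  fixes a :: "nat \<Rightarrow> real" and k r :: nat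
  assumes k: "k \<ge> 1" and r: "r \<ge> 1"
    and summable_power: "\<And>i. 2 \<le> i \<Longrightarrow> i \<le> k \<Longrightarrow> summable (\<lambda>n. a n / real (Suc n) ^ i)"
    and sums_diff: "(\<lambda>n. a n * (1 / real (Suc n) - 1 / real (Suc n + r))) sums D"
  shows "(\<lambda>n. a n / (real (Suc n) ^ k * real (Suc n + r))) sums
           ((\<Sum>i=2..k. (-1) ^ (k - i) / real r ^ (k - i + 1) * (\<Sum>n. a n / real (Suc n) ^ i))
            + (-1) ^ (k - 1) / real r ^ k * D)"
proof -
  have "a n / (real (Suc n) ^ k * real (Suc n + r)) =
          (\<Sum>i=2..k. (-1) ^ (k - i) / real r ^ (k - i + 1) * (a n / real (Suc n) ^ i))
          + (-1) ^ (k - 1) / real r ^ k * (a n * (1 / real (Suc n) - 1 / real (Suc n + r)))" for n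
  proof -
    have "a n / (real (Suc n) ^ k * real (Suc n + r)) = a n * (1 / (real (Suc n) ^ k * (real (Suc n) + real r)))"
      by simp
    also have "\<dots> = a n * ((\<Sum>i=2..k. (-1) ^ (k - i) / real r ^ (k - i + 1) * (1 / real (Suc n) ^ i))
                       + (-1) ^ (k - 1) / real r ^ k * (1 / real (Suc n) - 1 / (real (Suc n) + real r)))"
      using k r by (subst partial_fraction_inverse_power_times_shift) auto
    finally show ?thesis
      by (simp add: distrib_left sum_distrib_left mult_ac)
  qed
  then show ?thesis
    by (simp only:) (intro sums_add sums_sum sums_mult summable_sums summable_power sums_diff; simp)
qed

lemma sums_inverse_Suc_minus_inverse_shift:
  "(\<lambda>n. 1 / real (Suc n) - 1 / real (Suc n + j)) sums harm j"
proof -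
  define f :: "nat \<Rightarrow> real" where "f n = harm n - harm (n + j)" for n
  have "f = (\<lambda>n. - (\<Sum>i<j. 1 / real (Suc n + i)))"
    unfolding f_def by (rule ext) (metis harm_add_minus_harm minus_diff_eq)
  moreover have "(\<lambda>n. - (\<Sum>i<j. 1 / real (Suc n + i))) \<longlonglongrightarrow> - (\<Sum>i<j. 0)"
    by (intro tendsto_minus tendsto_sum) real_asymp
  ultimately have "f \<longlonglongrightarrow> 0"
    by simp
  then have "(\<lambda>n. f (Suc n) - f n) sums (0 - f 0)"
    by (rule telescope_sums)
  moreover have "f (Suc n) - f n = 1 / real (Suc n) - 1 / real (Suc n + j)" for n
    by (simp add: f_def harm_Suc divide_inverse)
  ultimately show ?thesis
    by (simp add: f_def harm_def)
qed

lemma sums_inverse_power_times_shift: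
  fixes k j :: nat
  assumes "k \<ge> 1" and "j \<ge> 1"
  shows "(\<lambda>n. 1 / (real (Suc n) ^ k * real (Suc n + j))) sums
           ((\<Sum>i=2..k. (-1) ^ (k - i) / real j ^ (k - i + 1) * zeta_nat i)
            + (-1) ^ (k - 1) / real j ^ k * harm j)"
proof -
  have "(\<lambda>n. (\<lambda>_. 1) n * (1 / real (Suc n) - 1 / real (Suc n + j))) sums harm j"
    using sums_inverse_Suc_minus_inverse_shift by simp
  from sums_weighted_inverse_power_times_shift[OF assms summable_inverse_power_Suc this]
  show ?thesis
    by (simp add: zeta_nat_def)
qed

lemma summable_inverse_power_times_shift:
  assumes "p \<ge> 1"
  shows "summable (\<lambda>k. 1 / (real (Suc k) ^ p * real (Suc k + j)))"
proof (rule summable_comparison_test'[OF summable_inverse_power_Suc[of 2]])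
  fix k :: nat
  have "real (Suc k) ^ 1 \<le> real (Suc k) ^ p"
    using assms by (intro power_increasing) auto
  then have "real (Suc k) ^ 2 \<le> real (Suc k) ^ p * real (Suc k + j)"
    by (simp add: power2_eq_square mult_mono)
  then show "norm (1 / (real (Suc k) ^ p * real (Suc k + j))) \<le> 1 / real (Suc k) ^ 2"
    by (simp add: frac_le del: of_nat_Suc of_nat_add)
qed simp

text \<open>Summation by parts with \<open>H_n^(p) - H_{n-1}^(p) = 1/n^p\<close> and
  \<open>1/n - 1/(n+r) = s_{n-1} - s_n\<close> for \<open>s_n = H_{n+r} - H_n\<close>; the boundary term
  \<open>H_N^(p) s_N \<le> r H_N / (N+1)\<close> vanishes.\<close>

lemma sums_gharm_times_inverse_Suc_minus_inverse_shift:
  fixes p r :: nat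
  assumes p: "p \<ge> 1"
  shows "(\<lambda>n. gharm (int p) (Suc n) * (1 / real (Suc n) - 1 / real (Suc n + r))) sums
           (\<Sum>j<r. \<Sum>k. 1 / (real (Suc k) ^ p * real (Suc k + j)))"
proof -
  define h where "h N = gharm (int p) N" for N
  define s :: "nat \<Rightarrow> real" where "s N = harm (N + r) - harm N" for N
  define t where "t j k = 1 / (real (Suc k) ^ p * real (Suc k + j))" for j k
  have h_Suc: "h (Suc N) = h N + 1 / real (Suc N) ^ p" for N
    by (simp add: h_def gharm_of_nat)
  have s_diff: "s N - s (Suc N) = 1 / real (Suc N) - 1 / real (Suc N + r)" for N
    by (simp add: s_def harm_Suc divide_inverse)
  have s_eq: "s N = (\<Sum>i<r. 1 / real (Suc N + i))" for N
    unfolding s_def by (rule harm_add_minus_harm)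
  have t_sum: "(\<Sum>j<r. t j N) = 1 / real (Suc N) ^ p * s N" for N
    unfolding t_def s_eq sum_distrib_left by (simp add: field_simps)
  have by_parts: "(\<Sum>n<N. h (Suc n) * (s n - s (Suc n))) = (\<Sum>j<r. \<Sum>k<N. t j k) - h N * s N" for N
  proof (induction N)
    case 0
    show ?case by (simp add: h_def gharm_def)
  next
    case (Suc N)
    have "(\<Sum>n<Suc N. h (Suc n) * (s n - s (Suc n)))
            = (\<Sum>j<r. \<Sum>k<N. t j k) - h N * s N + h (Suc N) * (s N - s (Suc N))"
      using Suc by simp
    also have "\<dots> = (\<Sum>j<r. \<Sum>k<N. t j k) + 1 / real (Suc N) ^ p * s N - h (Suc N) * s (Suc N)"
      unfolding h_Suc by (simp add: algebra_simps add_divide_distrib[symmetric])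
    also have "\<dots> = (\<Sum>j<r. \<Sum>k<Suc N. t j k) - h (Suc N) * s (Suc N)"
      unfolding t_sum[symmetric] by (simp add: sum.distrib)
    finally show ?case .
  qed
  have boundary: "(\<lambda>N. h N * s N) \<longlonglongrightarrow> 0"
  proof (rule Lim_null_comparison)
    show "(\<lambda>N. harm N / real (Suc N) * real r) \<longlonglongrightarrow> 0"
      by (rule tendsto_mult_left_zero[OF harm_divide_Suc_tendsto_0])
    show "\<forall>\<^sub>F N in sequentially. norm (h N * s N) \<le> harm N / real (Suc N) * real r"
    proof (intro always_eventually allI)
      fix N
      have "s N \<le> real r * (1 / real (Suc N))"
        unfolding s_eq by (rule sum_bounded_above[where A="{..<r}", simplified]) (simp add: frac_le)
      moreover have "0 \<le> h N" "h N \<le> harm N" "0 \<le> s N"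
        using gharm_of_nat_nonneg gharm_of_nat_le_harm[OF p] unfolding h_def s_eq
        by (auto intro: sum_nonneg)
      ultimately have "h N * s N \<le> harm N * (real r * (1 / real (Suc N)))"
        by (intro mult_mono) auto
      then show "norm (h N * s N) \<le> harm N / real (Suc N) * real r"
        using \<open>0 \<le> h N\<close> \<open>0 \<le> s N\<close> by simp
    qed
  qed
  have "(\<lambda>N. (\<Sum>j<r. \<Sum>k<N. t j k) - h N * s N) \<longlonglongrightarrow> (\<Sum>j<r. \<Sum>k. t j k) - 0"
    unfolding t_def
    by (intro tendsto_diff tendsto_sum boundary summable_LIMSEQ summable_inverse_power_times_shift p)
  then have "(\<lambda>n. h (Suc n) * (s n - s (Suc n))) sums (\<Sum>j<r. \<Sum>k. t j k)"
    unfolding sums_def by_parts by simp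
  then show ?thesis
    unfolding s_diff h_def t_def .
qed

lemma summable_gharm_divide_power:
  fixes p i :: nat
  assumes p: "p \<ge> 1" and i: "i \<ge> 2"
  shows "summable (\<lambda>n. gharm (int p) (Suc n) / real (Suc n) ^ i)"
proof (rule summable_comparison_test')
  show "summable (\<lambda>n. 2 * (gharm (int p) (Suc n) * (1 / real (Suc n) - 1 / real (Suc n + 1))))"
    using sums_gharm_times_inverse_Suc_minus_inverse_shift[OF p, of 1]
    by (intro summable_mult sums_summable)
next
  fix n :: nat
  define x where "x = real (Suc n)"
  have x: "x \<ge> 1"
    unfolding x_def by simp
  have "1 / x ^ i \<le> 1 / x ^ 2"
    using x i by (intro divide_left_mono power_increasing) auto
  also have "\<dots> \<le> 2 * (1 / x - 1 / (x + 1))"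
    using x by (simp add: divide_simps power2_eq_square)
  finally have "gharm (int p) (Suc n) * (1 / x ^ i) \<le> gharm (int p) (Suc n) * (2 * (1 / x - 1 / (x + 1)))"
    by (intro mult_left_mono gharm_of_nat_nonneg)
  then show "norm (gharm (int p) (Suc n) / real (Suc n) ^ i)
               \<le> 2 * (gharm (int p) (Suc n) * (1 / real (Suc n) - 1 / real (Suc n + 1)))"
    using gharm_of_nat_nonneg[of p "Suc n"] by (simp add: x_def algebra_simps)
qed

text \<open>Faulhaber's formula comes from \<open>\<Sum>l=1..n e^(lX) = X/(1 - e^(-X)) \<cdot> (e^(nX) - 1)/X\<close>
  by comparing coefficients of \<open>X^p\<close>.\<close>

lemma sum_fps_exp_of_nat:
  "(\<Sum>l=1..n. fps_exp (real l)) =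
     fps_X / (1 - fps_exp (-1)) * Abs_fps (\<lambda>k. real n ^ Suc k / fact (Suc k))"
proof -
  define g :: "real fps" where "g = 1 - fps_exp (-1)"
  have "fps_nth g 1 = 1"
    by (simp add: g_def)
  then have g: "g \<noteq> 0" "subdegree g = 1"
    by (auto intro: subdegreeI simp: g_def)
  have "(\<Sum>l=1..n. fps_exp (real l)) * g = fps_exp (real n) - 1" for n
  proof (induction n)
    case (Suc n)
    have "fps_exp (real (Suc n)) * fps_exp (-1) = fps_exp (real n)"
      by (simp flip: fps_exp_add_mult)
    with Suc show ?case
      by (simp add: g_def algebra_simps)
  qed simp
  also have "fps_exp (real n) - 1 = fps_X * Abs_fps (\<lambda>k. real n ^ Suc k / fact (Suc k))"
  proof (rule fps_ext)
    fix k
    show "fps_nth (fps_exp (real n) - 1) k = fps_nth (fps_X * Abs_fps (\<lambda>k. real n ^ Suc k / fact (Suc k))) k"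
      by (cases k) (simp_all add: fps_X_mult_nth algebra_simps)
  qed
  also have "fps_X = fps_X / g * g"
    using g by (simp add: fps_times_divide_eq)
  finally show ?thesis
    using g(1) by (simp add: g_def mult_ac)
qed

lemma sum_power_eq_bernoulli_plus:
  "(\<Sum>j=1..n. real j ^ p) =
     1 / real (p + 1) * (\<Sum>l=0..p. real ((p + 1) choose l) * bernoulli_plus l * real n ^ (p + 1 - l))"
proof -
  have "(\<Sum>j=1..n. real j ^ p / fact p) =
          (\<Sum>l=0..p. bernoulli_plus l / fact l * (real n ^ Suc (p - l) / fact (Suc (p - l))))"
    using arg_cong[OF sum_fps_exp_of_nat, of "\<lambda>f. fps_nth f p" n]
    by (simp add: fps_sum_nth fps_mult_nth bernoulli_plus_def)
  then have "(\<Sum>j=1..n. real j ^ p) =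
               fact p * (\<Sum>l=0..p. bernoulli_plus l / fact l * (real n ^ Suc (p - l) / fact (Suc (p - l))))"
    by (simp add: field_simps flip: sum_divide_distrib)
  also have "\<dots> = 1 / real (p + 1) * (\<Sum>l=0..p. real ((p + 1) choose l) * bernoulli_plus l * real n ^ (p + 1 - l))"
    unfolding sum_distrib_left
  proof (rule sum.cong)
    fix l assume "l \<in> {0..p}"
    then have "real ((p + 1) choose l) = real (p + 1) * fact p / (fact l * fact (Suc (p - l)))"
      and "p + 1 - l = Suc (p - l)"
      by (simp_all add: binomial_fact Suc_diff_le)
    moreover have "F * (b / A * (y / B)) = 1 / N * (N * F / (A * B) * b * y)"
      if "A \<noteq> 0" "B \<noteq> 0" "N \<noteq> 0" for F b A y B N :: real
      using that by (simp add: field_simps)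
    ultimately show "fact p * (bernoulli_plus l / fact l * (real n ^ Suc (p - l) / fact (Suc (p - l)))) =
                 1 / real (p + 1) * (real ((p + 1) choose l) * bernoulli_plus l * real n ^ (p + 1 - l))"
      by simp
  qed simp
  finally show ?thesis .
qed

lemma S_sum_of_nat_eq:
  fixes p m r :: nat
  assumes p: "p \<ge> 1" and m: "m \<ge> 1" and r: "r \<ge> 1"
  shows "S_sum (int p) m 1 r =
           (\<Sum>i=2..m. (-1) ^ (m - i) / real r ^ (m - i + 1) * S_pp p i)
           + (-1) ^ (m - 1) / real r ^ m * zeta_nat (p + 1)
           + (-1) ^ (m - 1) / real r ^ m *
               ((\<Sum>j=1..r-1. (-1) ^ (p + 1) * gharm 1 j / real j ^ p)
                + (\<Sum>l=2..p. (-1) ^ (p - l) * gharm (int (p - l + 1)) (r - 1) * zeta_nat l))"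
proof -
  define t where "t j = (\<Sum>k. 1 / (real (Suc k) ^ p * real (Suc k + j)))" for j
  obtain r' where r': "r = Suc r'"
    using r by (cases r) auto
  have "S_sum (int p) m 1 r =
          (\<Sum>i=2..m. (-1) ^ (m - i) / real r ^ (m - i + 1) * S_pp p i) + (-1) ^ (m - 1) / real r ^ m * (\<Sum>j<r. t j)"
    using sums_weighted_inverse_power_times_shift[OF m r summable_gharm_divide_power[OF p]
            sums_gharm_times_inverse_Suc_minus_inverse_shift[OF p]]
    unfolding S_sum_def S_pp_def t_def by (simp add: sums_iff)
  moreover have "t 0 = zeta_nat (p + 1)"
    by (simp add: t_def zeta_nat_def mult.commute)
  moreover have "(\<Sum>j=1..r-1. t j) =
                   (\<Sum>j=1..r-1. (-1) ^ (p + 1) * gharm 1 j / real j ^ p)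
                   + (\<Sum>l=2..p. (-1) ^ (p - l) * gharm (int (p - l + 1)) (r - 1) * zeta_nat l)"
  proof -
    have "(-1::real) ^ (p - 1) = (-1) ^ (p + 1)"
      using p by (cases p) simp_all
    then have t_eq: "t j = (-1) ^ (p + 1) * gharm 1 j / real j ^ p
                           + (\<Sum>l=2..p. (-1) ^ (p - l) / real j ^ (p - l + 1) * zeta_nat l)" if "j \<ge> 1" for j
      using sums_inverse_power_times_shift[OF p that] by (simp add: t_def sums_iff gharm_one)
    have "(\<Sum>j=1..r-1. t j) =
            (\<Sum>j=1..r-1. (-1) ^ (p + 1) * gharm 1 j / real j ^ p
                          + (\<Sum>l=2..p. (-1) ^ (p - l) / real j ^ (p - l + 1) * zeta_nat l))"
      by (rule sum.cong) (simp_all add: t_eq)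
    also have "\<dots> = (\<Sum>j=1..r-1. (-1) ^ (p + 1) * gharm 1 j / real j ^ p)
                     + (\<Sum>l=2..p. \<Sum>j=1..r-1. (-1) ^ (p - l) / real j ^ (p - l + 1) * zeta_nat l)"
      by (simp only: sum.distrib sum.swap[of _ "{1..r-1}"])
    also have "(\<Sum>l=2..p. \<Sum>j=1..r-1. (-1) ^ (p - l) / real j ^ (p - l + 1) * zeta_nat l)
                 = (\<Sum>l=2..p. (-1) ^ (p - l) * gharm (int (p - l + 1)) (r - 1) * zeta_nat l)"
      unfolding gharm_of_nat by (simp add: sum_distrib_left sum_distrib_right)
    finally show ?thesis .
  qed
  moreover have "(\<Sum>j<r. t j) = t 0 + (\<Sum>j=1..r-1. t j)"
    unfolding r' sum.lessThan_Suc_shift sum_bounds_lt_plus1 by simp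
  ultimately show ?thesis
    by (simp add: distrib_left add_divide_distrib)
qed

lemma S_sum_uminus_of_nat_eq:
  fixes p m r :: nat
  assumes r: "r \<ge> 1" and m: "m \<ge> p + 2"
  shows "S_sum (- int p) m 1 r =
           1 / real (p + 1) * (\<Sum>l=0..p. real ((p + 1) choose l) * bernoulli_plus l *
             ((\<Sum>i=2..m - p - 1 + l. (-1) ^ (m - p - 1 + l - i) / real r ^ (m - p + l - i) * zeta_nat i)
              + (-1) ^ (m - p - 2 + l) / real r ^ (m - p - 1 + l) * gharm 1 r))"
proof -
  define c where "c l = real ((p + 1) choose l) * bernoulli_plus l" for l
  define T where "T k = (\<Sum>i=2..k. (-1) ^ (k - i) / real r ^ (k - i + 1) * zeta_nat i)
                          + (-1) ^ (k - 1) / real r ^ k * harm r" for k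
  have term_eq: "gharm (- int p) (Suc n) / (real (Suc n) ^ m * real (Suc n + r) ^ 1) =
                   1 / real (p + 1) * (\<Sum>l=0..p. c l * (1 / (real (Suc n) ^ (m - p - 1 + l) * real (Suc n + r))))"
    for n
  proof -
    define x where "x = real (Suc n)"
    define y where "y = real (Suc n + r)"
    have "x ^ (p + 1 - l) / (x ^ m * y) = 1 / (x ^ (m - p - 1 + l) * y)" if "l \<in> {0..p}" for l
    proof -
      have "x ^ m = x ^ (m - p - 1 + l) * x ^ (p + 1 - l)"
        using that m by (simp flip: power_add)
      then show ?thesis
        by (simp add: x_def y_def)
    qed
    moreover have "gharm (- int p) (Suc n) / (x ^ m * y) =
                     1 / real (p + 1) * (\<Sum>l=0..p. c l * (x ^ (p + 1 - l) / (x ^ m * y)))"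
      unfolding gharm_uminus_of_nat sum_power_eq_bernoulli_plus c_def x_def
      by (simp add: sum_divide_distrib sum_distrib_left mult_ac)
    ultimately show ?thesis
      by (simp add: x_def y_def)
  qed
  have "(\<lambda>n. 1 / real (p + 1) * (\<Sum>l=0..p. c l * (1 / (real (Suc n) ^ (m - p - 1 + l) * real (Suc n + r)))))
          sums (1 / real (p + 1) * (\<Sum>l=0..p. c l * T (m - p - 1 + l)))"
    unfolding T_def using m r by (intro sums_mult sums_sum sums_inverse_power_times_shift) auto
  then have "S_sum (- int p) m 1 r = 1 / real (p + 1) * (\<Sum>l=0..p. c l * T (m - p - 1 + l))"
    unfolding S_sum_def term_eq by (simp add: sums_iff)
  moreover have "T (m - p - 1 + l) =
                   (\<Sum>i=2..m - p - 1 + l. (-1) ^ (m - p - 1 + l - i) / real r ^ (m - p + l - i) * zeta_nat i)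
                   + (-1) ^ (m - p - 2 + l) / real r ^ (m - p - 1 + l) * gharm 1 r" for l
  proof -
    have "m - p - 1 + l - i + 1 = m - p + l - i" if "i \<le> m - p - 1 + l" for i
      using that m by auto
    moreover have "m - p - 1 + l - 1 = m - p - 2 + l"
      using m by auto
    ultimately show ?thesis
      unfolding T_def gharm_one by (intro arg_cong2[where f = "(+)"] sum.cong) auto
  qed
  ultimately show ?thesis
    by (simp add: c_def)
qed

theorem lemma2:
  shows "(\<forall>p m r :: nat. p \<ge> 1 \<longrightarrow> m \<ge> 1 \<longrightarrow> r \<ge> 1 \<longrightarrow>
            S_sum (int p) m 1 r =
              (\<Sum>i=2..m. (-1) ^ (m - i) / real r ^ (m - i + 1) * S_pp p i)
              + (-1) ^ (m - 1) / real r ^ m * zeta_nat (p + 1)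
              + (-1) ^ (m - 1) / real r ^ m *
                  ((\<Sum>j=1..r-1. (-1) ^ (p + 1) * gharm 1 j / real j ^ p)
                   + (\<Sum>l=2..p. (-1) ^ (p - l) * gharm (int (p - l + 1)) (r - 1) * zeta_nat l)))
       \<and> (\<forall>p m r :: nat. m \<ge> 1 \<longrightarrow> r \<ge> 1 \<longrightarrow> m \<ge> p + 2 \<longrightarrow>
            S_sum (- int p) m 1 r =
              1 / real (p + 1) * (\<Sum>l=0..p. real ((p + 1) choose l) * bernoulli_plus l *
                ((\<Sum>i=2..m - p - 1 + l. (-1) ^ (m - p - 1 + l - i) / real r ^ (m - p + l - i) * zeta_nat i)
                 + (-1) ^ (m - p - 2 + l) / real r ^ (m - p - 1 + l) * gharm 1 r)))"
  using S_sum_of_nat_eq S_sum_uminus_of_nat_eq by blast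

end
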